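(* Let $K$ be an algebraically closed field of characteristic $0$ and let $A=(A_{ij})_{i,j=1}^{n+1}$ be a block square matrix of order $2n+1$ with entries $a_{ij},b_{ij}\in K$ and blocks $A_{ij}=\begin{pmatrix} a_{ij}&b_{ij}\\ b_{ij}&a_{ij}\end{pmatrix}$ for $1\le i,j\le n$; $A_{i,n+1}=\begin{pmatrix}a_{i,n+1}\\ a_{i,n+1}\end{pmatrix}$ for $1\le i\le n$; $A_{n+1,j}=\begin{pmatrix}a_{n+1,j}&b_{n+1,j}\end{pmatrix}$ for $1\le j\le n$; and $A_{n+1,n+1}=a_{n+1,n+1}$. Let $S=(s_{ij})$ be the $(n+1)\times(n+1)$ matrix with $s_{ij}=a_{ij}+b_{ij}$ for $1\le i\le n+1$, $1\le j\le n$, and $s_{i,n+1}=a_{i,n+1}$ for $1\le i\le n+1$; and let $C=(c_{ij})$ be the $n\times n$ matrix with $c_{ij}=a_{ij}-b_{ij}$, $1\le i,j\le n$. Then $\sigma(A)=\sigma(S)\cup\sigma(C)$.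
   Context: $\sigma(X)$ denotes the spectrum of a square matrix $X$. *)

theory Defs
  imports "Jordan_Normal_Form.Spectral_Radius"
begin

text \<open>Indices are 0-based. Block indices i,j range over 0..n-1 (paper's 1..n), the
 index n stands for the paper's n+1. Block row i of A occupies rows 2i and 2i+1,
 the final row/column of A has index 2n.\<close>

definition block_mat :: "nat \<Rightarrow> (nat \<Rightarrow> nat \<Rightarrow> 'a) \<Rightarrow> (nat \<Rightarrow> nat \<Rightarrow> 'a) \<Rightarrow> 'a mat" where
  "block_mat n a b = mat (2*n+1) (2*n+1) (\<lambda>(r, c).
     if r < 2*n \<and> c < 2*n then
       (if r mod 2 = c mod 2 then a (r div 2) (c div 2) else b (r div 2) (c div 2))
     else if r < 2*n then a (r div 2) n
     else if c < 2*n then (if c mod 2 = 0 then a n (c div 2) else b n (c div 2))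
     else a n n)"

definition S_mat :: "nat \<Rightarrow> (nat \<Rightarrow> nat \<Rightarrow> 'a::ring) \<Rightarrow> (nat \<Rightarrow> nat \<Rightarrow> 'a) \<Rightarrow> 'a mat" where
  "S_mat n a b = mat (n+1) (n+1) (\<lambda>(i, j). if j < n then a i j + b i j else a i n)"

definition C_mat :: "nat \<Rightarrow> (nat \<Rightarrow> nat \<Rightarrow> 'a::ring) \<Rightarrow> (nat \<Rightarrow> nat \<Rightarrow> 'a) \<Rightarrow> 'a mat" where
  "C_mat n a b = mat n n (\<lambda>(i, j). a i j - b i j)"

end

theory Submission
  imports Defs
begin

text \<open>Let D be the (2n+1) \<times> (n+1) matrix whose i-th column is e(2i) + e(2i+1) (and e(2n) for
  i = n), and E the (2n+1) \<times> n matrix with columns e(2i) - e(2i+1). Both are injective, and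
  A D = D S, A^T E = E C^T. Hence eigenvectors of S lift to eigenvectors of A, and eigenvectors of
  C^T to eigenvectors of A^T, which has the same spectrum as A. Conversely, if A w = k w and k is
  not an eigenvalue of C, then C (E^T w) = E^T A w = k E^T w forces E^T w = 0, so w = D v
  with S v = k v.\<close>

lemma eigenvector_mult_vec_iff:
  fixes A B D :: "'a :: field mat"
  assumes A: "A \<in> carrier_mat m m" and B: "B \<in> carrier_mat p p"
    and D: "D \<in> carrier_mat m p" and AD: "A * D = D * B" and inj: "inj_on ((*\<^sub>v) D) (carrier_vec p)"
    and v: "v \<in> carrier_vec p"
  shows "eigenvector A (D *\<^sub>v v) k \<longleftrightarrow> eigenvector B v k"
proof -
  have "A *\<^sub>v (D *\<^sub>v v) = D *\<^sub>v (B *\<^sub>v v)"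
    using A B D v by (metis AD assoc_mult_mat_vec)
  moreover have "k \<cdot>\<^sub>v (D *\<^sub>v v) = D *\<^sub>v (k \<cdot>\<^sub>v v)"
    using D v by (simp add: mult_mat_vec)
  ultimately have eq:
    "A *\<^sub>v (D *\<^sub>v v) = k \<cdot>\<^sub>v (D *\<^sub>v v) \<longleftrightarrow> B *\<^sub>v v = k \<cdot>\<^sub>v v"
    using inj B v by (auto dest: inj_onD)
  have "D *\<^sub>v 0\<^sub>v p = 0\<^sub>v m"
    using D by (intro eq_vecI) auto
  then have "D *\<^sub>v v = 0\<^sub>v m \<longleftrightarrow> v = 0\<^sub>v p"
    using v inj_onD[OF inj, of v "0\<^sub>v p"] by auto
  then show ?thesis
    using A B D v eq unfolding eigenvector_def by auto
qed

lemma spectrum_subset_if_intertwined: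
  fixes A B D :: "'a :: field mat"
  assumes "A \<in> carrier_mat m m" "B \<in> carrier_mat p p" "D \<in> carrier_mat m p"
    and "A * D = D * B" and "inj_on ((*\<^sub>v) D) (carrier_vec p)"
  shows "spectrum B \<subseteq> spectrum A"
  using eigenvector_mult_vec_iff[OF assms] assms(2)
  unfolding spectrum_def eigenvalue_def eigenvector_def by blast

lemma mult_vec_eq_zero_if_not_in_spectrum:
  fixes A B P :: "'a :: field mat"
  assumes A: "A \<in> carrier_mat m m" and B: "B \<in> carrier_mat p p"
    and P: "P \<in> carrier_mat p m" and PA: "P * A = B * P"
    and w: "w \<in> carrier_vec m" and Aw: "A *\<^sub>v w = k \<cdot>\<^sub>v w" and k: "k \<notin> spectrum B"
  shows "P *\<^sub>v w = 0\<^sub>v p"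
proof -
  have "B *\<^sub>v (P *\<^sub>v w) = P *\<^sub>v (A *\<^sub>v w)"
    using A B P w by (metis PA assoc_mult_mat_vec)
  also have "\<dots> = k \<cdot>\<^sub>v (P *\<^sub>v w)"
    using P w by (simp add: Aw mult_mat_vec)
  finally show ?thesis
    using k B mult_mat_vec_carrier[OF P w]
    unfolding spectrum_def eigenvalue_def eigenvector_def by auto
qed

lemma spectrum_transpose_mat:
  assumes "(A :: 'a :: field mat) \<in> carrier_mat n n"
  shows "spectrum (transpose_mat A) = spectrum A"
  using assms by (simp add: spectrum_root_char_poly[of _ n])

definition sym_embed_mat :: "nat \<Rightarrow> 'a :: semiring_1 mat" where
  "sym_embed_mat n = mat (2*n+1) (n+1) (\<lambda>(r, i). of_bool (r div 2 = i))"

definition antisym_embed_mat :: "nat \<Rightarrow> 'a :: ring_1 mat" where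
  "antisym_embed_mat n = mat (2*n+1) n (\<lambda>(r, i). of_bool (r div 2 = i) * (-1) ^ r)"

lemma dim_sym_embed_mat [simp]:
  "dim_row (sym_embed_mat n) = 2*n+1" "dim_col (sym_embed_mat n) = n+1"
  by (simp_all add: sym_embed_mat_def)

lemma dim_antisym_embed_mat [simp]:
  "dim_row (antisym_embed_mat n) = 2*n+1" "dim_col (antisym_embed_mat n) = n"
  by (simp_all add: antisym_embed_mat_def)

lemma sym_embed_mat_carrier: "sym_embed_mat n \<in> carrier_mat (2*n+1) (n+1)"
  by (rule carrier_matI) simp_all

lemma antisym_embed_mat_carrier: "antisym_embed_mat n \<in> carrier_mat (2*n+1) n"
  by (rule carrier_matI) simp_all

lemma sum_of_bool_div2_eq:
  fixes f :: "nat \<Rightarrow> 'a :: semiring_1"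
  shows "i < n \<Longrightarrow> (\<Sum>c = 0..<2*n+1. of_bool (c div 2 = i) * f c) = f (2*i) + f (2*i+1)"
    and "(\<Sum>c = 0..<2*n+1. of_bool (c div 2 = n) * f c) = f (2*n)"
proof -
  assume "i < n"
  then have "{0..<2*n+1} \<inter> {c. c div 2 = i} = {2*i, 2*i+1}" by auto
  then show "(\<Sum>c = 0..<2*n+1. of_bool (c div 2 = i) * f c) = f (2*i) + f (2*i+1)"
    by (simp only: sum_of_bool_mult_eq[OF finite_atLeastLessThan]) simp
next
  have "{0..<2*n+1} \<inter> {c. c div 2 = n} = {2*n}" by auto
  then show "(\<Sum>c = 0..<2*n+1. of_bool (c div 2 = n) * f c) = f (2*n)"
    by (simp only: sum_of_bool_mult_eq[OF finite_atLeastLessThan]) simp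
qed

lemma index_sym_embed_mat_mult_vec:
  assumes "dim_vec v = n+1" "r < 2*n+1"
  shows "(sym_embed_mat n *\<^sub>v v) $ r = v $ (r div 2)"
proof -
  have "{0..<n+1} \<inter> {i. r div 2 = i} = {r div 2}" using assms(2) by auto
  then show ?thesis
    using assms by (simp add: sym_embed_mat_def scalar_prod_def del: sum.op_ivl_Suc)
qed

lemma index_antisym_embed_mat_mult_vec:
  assumes "dim_vec u = n" "r < 2*n+1"
  shows "(antisym_embed_mat n *\<^sub>v u) $ r = (if r < 2*n then (-1) ^ r * u $ (r div 2) else 0)"
proof -
  have "{0..<n} \<inter> {i. r div 2 = i} = (if r < 2*n then {r div 2} else {})"
    using assms(2) by auto
  then show ?thesis
    using assms by (simp add: antisym_embed_mat_def scalar_prod_def mult.assoc)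
qed

lemma index_transpose_antisym_embed_mat_mult_vec:
  assumes "dim_vec w = 2*n+1" "i < n"
  shows "(transpose_mat (antisym_embed_mat n) *\<^sub>v w) $ i = w $ (2*i) - w $ (2*i+1)"
proof -
  have "(transpose_mat (antisym_embed_mat n) *\<^sub>v w) $ i
      = (\<Sum>c = 0..<2*n+1. of_bool (c div 2 = i) * ((-1) ^ c * w $ c))"
    using assms
    by (simp add: antisym_embed_mat_def scalar_prod_def mult.assoc del: sum.op_ivl_Suc)
  then show ?thesis
    using assms(2) by (simp only: sum_of_bool_div2_eq) simp
qed

lemma index_sym_embed_mat_mult:
  assumes "B \<in> carrier_mat (n+1) m" "r < 2*n+1" "j < m"
  shows "(sym_embed_mat n * B) $$ (r, j) = B $$ (r div 2, j)"
  using assms index_sym_embed_mat_mult_vec[of "col B j" n r] by auto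

lemma index_antisym_embed_mat_mult:
  assumes "B \<in> carrier_mat n m" "r < 2*n+1" "j < m"
  shows "(antisym_embed_mat n * B) $$ (r, j)
    = (if r < 2*n then (-1) ^ r * B $$ (r div 2, j) else 0)"
  using assms index_antisym_embed_mat_mult_vec[of "col B j" n r] by auto

lemma index_transpose_antisym_embed_mat_mult:
  assumes "B \<in> carrier_mat (2*n+1) m" "i < n" "j < m"
  shows "(transpose_mat (antisym_embed_mat n) * B) $$ (i, j)
    = B $$ (2*i, j) - B $$ (2*i+1, j)"
  using assms index_transpose_antisym_embed_mat_mult_vec[of "col B j" n i] by auto

lemma inj_on_sym_embed_mat:
  "inj_on ((*\<^sub>v) (sym_embed_mat n :: 'a :: semiring_1 mat)) (carrier_vec (n+1))"
proof (rule inj_onI)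
  fix v v' :: "'a vec"
  assume v: "v \<in> carrier_vec (n+1)" and v': "v' \<in> carrier_vec (n+1)"
    and eq: "sym_embed_mat n *\<^sub>v v = sym_embed_mat n *\<^sub>v v'"
  have "v $ i = v' $ i" if "i < n+1" for i
    using arg_cong[OF eq, of "\<lambda>x. x $ (2*i)"] that v v'
      index_sym_embed_mat_mult_vec[of v n "2*i"] index_sym_embed_mat_mult_vec[of v' n "2*i"]
    by simp
  then show "v = v'" using v v' by (intro eq_vecI) auto
qed

lemma inj_on_antisym_embed_mat:
  "inj_on ((*\<^sub>v) (antisym_embed_mat n :: 'a :: ring_1 mat)) (carrier_vec n)"
proof (rule inj_onI)
  fix u u' :: "'a vec"
  assume u: "u \<in> carrier_vec n" and u': "u' \<in> carrier_vec n"
    and eq: "antisym_embed_mat n *\<^sub>v u = antisym_embed_mat n *\<^sub>v u'"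
  have "u $ i = u' $ i" if "i < n" for i
    using arg_cong[OF eq, of "\<lambda>x. x $ (2*i)"] that u u'
      index_antisym_embed_mat_mult_vec[of u n "2*i"] index_antisym_embed_mat_mult_vec[of u' n "2*i"]
    by simp
  then show "u = u'" using u u' by (intro eq_vecI) auto
qed

lemma eq_sym_embed_mat_mult_even_entries:
  assumes w: "w \<in> carrier_vec (2*n+1)"
    and ker: "transpose_mat (antisym_embed_mat n) *\<^sub>v w = 0\<^sub>v n"
  shows "w = sym_embed_mat n *\<^sub>v vec (n+1) (\<lambda>i. w $ (2*i))"
proof (rule eq_vecI)
  fix r assume "r < dim_vec (sym_embed_mat n *\<^sub>v vec (n+1) (\<lambda>i. w $ (2*i)))"
  then have r: "r < 2*n+1" by simp
  have pair: "w $ (2*i+1) = w $ (2*i)" if "i < n" for i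
    using arg_cong[OF ker, of "\<lambda>x. x $ i"] w that
      index_transpose_antisym_embed_mat_mult_vec[of w n i]
    by simp
  have "w $ r = w $ (2 * (r div 2))"
  proof (cases "even r")
    case False
    then have "r = 2 * (r div 2) + 1" "r div 2 < n" using r by presburger+
    then show ?thesis using pair by metis
  qed simp
  then show "w $ r = (sym_embed_mat n *\<^sub>v vec (n+1) (\<lambda>i. w $ (2*i))) $ r"
    using r index_sym_embed_mat_mult_vec[of "vec (n+1) (\<lambda>i. w $ (2*i))" n r] by simp
qed (use w in simp)

lemma dim_block_mat [simp]:
  "dim_row (block_mat n a b) = 2*n+1" "dim_col (block_mat n a b) = 2*n+1"
  by (simp_all add: block_mat_def)

lemma dim_S_mat [simp]: "dim_row (S_mat n a b) = n+1" "dim_col (S_mat n a b) = n+1"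
  by (simp_all add: S_mat_def)

lemma dim_C_mat [simp]: "dim_row (C_mat n a b) = n" "dim_col (C_mat n a b) = n"
  by (simp_all add: C_mat_def)

lemma block_mat_carrier: "block_mat n a b \<in> carrier_mat (2*n+1) (2*n+1)"
  by (rule carrier_matI) simp_all

lemma S_mat_carrier: "S_mat n a b \<in> carrier_mat (n+1) (n+1)"
  by (rule carrier_matI) simp_all

lemma C_mat_carrier: "C_mat n a b \<in> carrier_mat n n"
  by (rule carrier_matI) simp_all

lemma block_mat_mult_sym_embed_mat:
  fixes a b :: "nat \<Rightarrow> nat \<Rightarrow> 'a :: comm_ring_1"
  shows "block_mat n a b * sym_embed_mat n = sym_embed_mat n * S_mat n a b"
proof (rule eq_matI)
  let ?A = "block_mat n a b" and ?D = "sym_embed_mat n :: 'a mat" and ?S = "S_mat n a b"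
  fix r i assume "r < dim_row (?D * ?S)" "i < dim_col (?D * ?S)"
  then have r: "r < 2*n+1" and i: "i < n+1" by simp_all
  then have r_cases: "r < 2*n \<or> r = 2*n" by linarith
  have "(?A * ?D) $$ (r, i) = (\<Sum>c = 0..<2*n+1. of_bool (c div 2 = i) * ?A $$ (r, c))"
    using r i by (simp add: sym_embed_mat_def scalar_prod_def mult.commute
        del: sum.op_ivl_Suc sum_mult_of_bool_eq sum_of_bool_mult_eq)
  also have "\<dots> = ?S $$ (r div 2, i)"
  proof (cases "i < n")
    case True
    show ?thesis
      using r_cases True
      by (simp only: sum_of_bool_div2_eq(1)[OF True]) (auto simp: block_mat_def S_mat_def)
  next
    case False
    then have "i = n" using i by simp
    show ?thesis
      using r_cases
      by (simp only: \<open>i = n\<close> sum_of_bool_div2_eq(2)) (auto simp: block_mat_def S_mat_def)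
  qed
  also have "\<dots> = (?D * ?S) $$ (r, i)"
    using r i by (rule index_sym_embed_mat_mult[OF S_mat_carrier, symmetric])
  finally show "(?A * ?D) $$ (r, i) = (?D * ?S) $$ (r, i)" .
qed simp_all

lemma transpose_block_mat_mult_antisym_embed_mat:
  fixes a b :: "nat \<Rightarrow> nat \<Rightarrow> 'a :: comm_ring_1"
  shows "transpose_mat (block_mat n a b) * antisym_embed_mat n
    = antisym_embed_mat n * transpose_mat (C_mat n a b)"
proof (rule eq_matI)
  let ?A = "block_mat n a b" and ?E = "antisym_embed_mat n :: 'a mat" and ?C = "C_mat n a b"
  fix r i assume "r < dim_row (?E * transpose_mat ?C)" "i < dim_col (?E * transpose_mat ?C)"
  then have r: "r < 2*n+1" and i: "i < n" by simp_all
  have "transpose_mat (transpose_mat ?E * ?A) = transpose_mat ?A * ?E"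
    using transpose_mult[OF transpose_carrier_mat[THEN iffD2, OF antisym_embed_mat_carrier]
        block_mat_carrier]
    by simp
  then have "(transpose_mat ?A * ?E) $$ (r, i) = (transpose_mat ?E * ?A) $$ (i, r)"
    using r i
    by (metis dim_block_mat(2) dim_antisym_embed_mat(2) index_mult_mat(3) index_transpose_mat(1,3))
  also have "\<dots> = ?A $$ (2*i, r) - ?A $$ (2*i+1, r)"
    using i r by (rule index_transpose_antisym_embed_mat_mult[OF block_mat_carrier])
  also have "\<dots> = (if r < 2*n then (-1) ^ r * ?C $$ (i, r div 2) else 0)"
    using i r by (cases "even r") (auto simp: block_mat_def C_mat_def)
  also have "\<dots> = (?E * transpose_mat ?C) $$ (r, i)"
    using index_antisym_embed_mat_mult[OF transpose_carrier_mat[THEN iffD2, OF C_mat_carrier[of n a b]]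
        r i] i
    by auto
  finally show "(transpose_mat ?A * ?E) $$ (r, i) = (?E * transpose_mat ?C) $$ (r, i)" .
qed simp_all

lemma transpose_antisym_embed_mat_mult_block_mat:
  fixes a b :: "nat \<Rightarrow> nat \<Rightarrow> 'a :: comm_ring_1"
  shows "transpose_mat (antisym_embed_mat n) * block_mat n a b
    = C_mat n a b * transpose_mat (antisym_embed_mat n)"
proof -
  have "transpose_mat (transpose_mat (block_mat n a b) * antisym_embed_mat n)
      = transpose_mat (antisym_embed_mat n) * block_mat n a b"
    using transpose_mult[OF transpose_carrier_mat[THEN iffD2, OF block_mat_carrier[of n a b]]
        antisym_embed_mat_carrier[of n]]
    by simp
  moreover have "transpose_mat (antisym_embed_mat n * transpose_mat (C_mat n a b))
      = C_mat n a b * transpose_mat (antisym_embed_mat n)"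
    using transpose_mult[OF antisym_embed_mat_carrier[of n]
        transpose_carrier_mat[THEN iffD2, OF C_mat_carrier[of n a b]]]
    by simp
  ultimately show ?thesis
    by (simp only: transpose_block_mat_mult_antisym_embed_mat)
qed

lemma spectrum_S_mat_subset:
  fixes a b :: "nat \<Rightarrow> nat \<Rightarrow> 'a :: field"
  shows "spectrum (S_mat n a b) \<subseteq> spectrum (block_mat n a b)"
  by (rule spectrum_subset_if_intertwined[OF block_mat_carrier S_mat_carrier sym_embed_mat_carrier
        block_mat_mult_sym_embed_mat inj_on_sym_embed_mat])

lemma spectrum_C_mat_subset:
  fixes a b :: "nat \<Rightarrow> nat \<Rightarrow> 'a :: field"
  shows "spectrum (C_mat n a b) \<subseteq> spectrum (block_mat n a b)"
proof -
  have "spectrum (transpose_mat (C_mat n a b)) \<subseteq> spectrum (transpose_mat (block_mat n a b))"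
    by (rule spectrum_subset_if_intertwined[OF transpose_carrier_mat[THEN iffD2, OF block_mat_carrier]
          transpose_carrier_mat[THEN iffD2, OF C_mat_carrier] antisym_embed_mat_carrier
          transpose_block_mat_mult_antisym_embed_mat inj_on_antisym_embed_mat])
  then show ?thesis
    by (simp only: spectrum_transpose_mat[OF block_mat_carrier]
        spectrum_transpose_mat[OF C_mat_carrier])
qed

lemma spectrum_block_mat_subset:
  fixes a b :: "nat \<Rightarrow> nat \<Rightarrow> 'a :: field"
  shows "spectrum (block_mat n a b) \<subseteq> spectrum (S_mat n a b) \<union> spectrum (C_mat n a b)"
proof
  fix k assume "k \<in> spectrum (block_mat n a b)"
  then obtain w where w: "eigenvector (block_mat n a b) w k"
    unfolding spectrum_def eigenvalue_def by blast
  show "k \<in> spectrum (S_mat n a b) \<union> spectrum (C_mat n a b)"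
  proof (cases "k \<in> spectrum (C_mat n a b)")
    case False
    define v where "v = vec (n+1) (\<lambda>i. w $ (2*i))"
    have w_carrier: "w \<in> carrier_vec (2*n+1)" and Aw: "block_mat n a b *\<^sub>v w = k \<cdot>\<^sub>v w"
      using w unfolding eigenvector_def by auto
    have "transpose_mat (antisym_embed_mat n) *\<^sub>v w = 0\<^sub>v n"
      by (rule mult_vec_eq_zero_if_not_in_spectrum[OF block_mat_carrier C_mat_carrier
            transpose_carrier_mat[THEN iffD2, OF antisym_embed_mat_carrier]
            transpose_antisym_embed_mat_mult_block_mat w_carrier Aw False])
    then have "w = sym_embed_mat n *\<^sub>v v"
      unfolding v_def by (rule eq_sym_embed_mat_mult_even_entries[OF w_carrier])
    with w have "eigenvector (block_mat n a b) (sym_embed_mat n *\<^sub>v v) k"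
      by simp
    then have "eigenvector (S_mat n a b) v k"
      using eigenvector_mult_vec_iff[OF block_mat_carrier S_mat_carrier sym_embed_mat_carrier
          block_mat_mult_sym_embed_mat inj_on_sym_embed_mat, of v] by (simp add: v_def)
    then show ?thesis
      unfolding spectrum_def eigenvalue_def by blast
  qed simp
qed

theorem theorem5:
  fixes n :: nat and a b :: "nat \<Rightarrow> nat \<Rightarrow> 'a :: {alg_closed_field, field_char_0}"
  shows "spectrum (block_mat n a b) = spectrum (S_mat n a b) \<union> spectrum (C_mat n a b)"
  using spectrum_S_mat_subset spectrum_C_mat_subset spectrum_block_mat_subset by blast

end
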